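(* Let $m\ge2$ and $\Omega_{\mathbb{J}(2m)}=\sum_{j=1}^m(z_{2j-1}dz_{2j}-z_{2j}dz_{2j-1})$ on $\mathbb{C}^{2m}$. Then $\Omega_{\mathbb{J}(2m)}$ has no integral manifold through the origin.
   Context: An integral manifold of a holomorphic one-form $\Omega$ through a point $p$ is a germ at $p$ of an irreducible codimension one complex analytic subset $\Lambda$ whose regular part $\Lambda^*=\Lambda\setminus\operatorname{sing}(\Lambda)$ satisfies $T\Lambda^*\subset\operatorname{Ker}(\Omega)|_{\Lambda^*}$. *)

theory Defs
  imports "HOL-Analysis.Analysis"
begin

definition cholo_on :: "(complex ^ 'n) set \<Rightarrow> (complex ^ 'n \<Rightarrow> complex) \<Rightarrow> bool" where
  "cholo_on V f \<longleftrightarrow> (\<forall>x\<in>V. \<exists>L. (f has_derivative L) (at x) \<and>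
       (\<forall>v. L (\<i> *s v) = \<i> * L v))"

definition analytic_in :: "(complex ^ 'n) set \<Rightarrow> (complex ^ 'n) set \<Rightarrow> bool" where
  "analytic_in U A \<longleftrightarrow> open U \<and> A \<subseteq> U \<and>
     (\<forall>x\<in>U. \<exists>V. open V \<and> x \<in> V \<and> V \<subseteq> U \<and>
        (\<exists>(k::nat) f. (\<forall>i<k. cholo_on V (f i)) \<and> A \<inter> V = {z\<in>V. \<forall>i<k. f i z = 0}))"

definition germ_eq :: "'a::topological_space \<Rightarrow> 'a set \<Rightarrow> 'a set \<Rightarrow> bool" where
  "germ_eq p B C \<longleftrightarrow> (\<exists>W. open W \<and> p \<in> W \<and> B \<inter> W = C \<inter> W)"

definition irreducible_germ :: "complex ^ 'n \<Rightarrow> (complex ^ 'n) set \<Rightarrow> (complex ^ 'n) set \<Rightarrow> bool" where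
  "irreducible_germ p U A \<longleftrightarrow> p \<in> A \<and>
     (\<forall>V A1 A2. open V \<and> p \<in> V \<and> V \<subseteq> U \<and> analytic_in V A1 \<and> analytic_in V A2 \<and>
        A \<inter> V = A1 \<union> A2 \<longrightarrow> germ_eq p A1 A \<or> germ_eq p A2 A)"

definition regular_pt_dim :: "(complex ^ 'n) set \<Rightarrow> complex ^ 'n \<Rightarrow> nat \<Rightarrow> bool" where
  "regular_pt_dim A x d \<longleftrightarrow> x \<in> A \<and> d \<le> CARD('n) \<and>
     (\<exists>W g. open W \<and> x \<in> W \<and> (\<forall>i < CARD('n) - d. cholo_on W (g i)) \<and>
        (\<forall>y\<in>W. \<exists>L. (\<forall>i < CARD('n) - d. (g i has_derivative L i) (at y)) \<and>
            (\<forall>c::nat \<Rightarrow> complex. (\<forall>v. (\<Sum>i < CARD('n) - d. c i * L i v) = 0)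
                 \<longrightarrow> (\<forall>i < CARD('n) - d. c i = 0))) \<and>
        A \<inter> W = {z\<in>W. \<forall>i < CARD('n) - d. g i z = 0})"

definition regular_pt :: "(complex ^ 'n) set \<Rightarrow> complex ^ 'n \<Rightarrow> bool" where
  "regular_pt A x \<longleftrightarrow> (\<exists>d. regular_pt_dim A x d)"

text \<open>Tangent vectors of A at x: velocities of curves in A through x
  (at regular points this is the tangent space of the manifold A*).\<close>
definition tangent_space :: "(complex ^ 'n) set \<Rightarrow> complex ^ 'n \<Rightarrow> (complex ^ 'n) set" where
  "tangent_space A x = {v. \<exists>\<gamma>::real \<Rightarrow> complex ^ 'n. \<gamma> 0 = x \<and>
       (\<gamma> has_vector_derivative v) (at 0) \<and> (\<forall>\<^sub>F t in nhds 0. \<gamma> t \<in> A)}"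

text \<open>A one-form Omega is given as Omega z v (linear in v). Integral manifold of
  Omega through p: germ at p of an irreducible codimension-one analytic set whose
  regular part is tangent to Ker Omega.\<close>
definition has_integral_manifold ::
  "(complex ^ 'n \<Rightarrow> complex ^ 'n \<Rightarrow> complex) \<Rightarrow> complex ^ 'n \<Rightarrow> bool" where
  "has_integral_manifold \<Omega> p \<longleftrightarrow>
     (\<exists>U A. open U \<and> p \<in> U \<and> analytic_in U A \<and> p \<in> A \<and> irreducible_germ p U A \<and>
        (\<forall>x d. regular_pt_dim A x d \<longrightarrow> d = CARD('n) - 1) \<and>
        (\<forall>x. regular_pt A x \<longrightarrow> tangent_space A x \<subseteq> {v. \<Omega> x v = 0}))"

text \<open>Omega_J(2m) on C^(2m), with coordinates indexed by 'm \<times> bool: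
  z_(2j-1) = z$(j,False), z_(2j) = z$(j,True).\<close>
definition omegaJ :: "complex ^ ('m::finite \<times> bool) \<Rightarrow> complex ^ ('m \<times> bool) \<Rightarrow> complex" where
  "omegaJ z v = (\<Sum>j\<in>UNIV. z $ (j, False) * v $ (j, True) - z $ (j, True) * v $ (j, False))"

end

(* Suppose A were an integral manifold of Omega_J through 0. Among the points of A near 0 take one,
   x, at which the number r of holomorphic functions vanishing on A with independent differentials
   is maximal. Flattening these r functions by the inverse function theorem, maximality and the
   identity principle show that near x the set A is exactly their common zero set, so these points
   are regular of codimension r; the hypothesis on the dimension of regular points forces r = 1,
   i.e. A = {h = 0} near x with dh(x) nonzero.
   Tangency of A to ker Omega_J says that the pull-back of Omega_J to the leaves of the flattening
   vanishes; differentiating, the symplectic form dOmega_J = 2 sum_j dz_(2j-1) wedge dz_(2j)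
   vanishes on the hyperplane ker dh(x). But for m >= 2 no hyperplane of C^(2m) is isotropic for
   a symplectic form.
   The holomorphic calculus in several variables used on the way (holomorphy and symmetry of
   second derivatives, the identity principle along lines) comes from Cauchy's formula on
   complex lines. *)

theory Submission
  imports Defs "HOL-Complex_Analysis.Complex_Analysis"
begin

no_notation fps_nth (infixl \<open>$\<close> 75)

section \<open>Holomorphic functions of several complex variables\<close>

definition fderiv :: "(complex^'n \<Rightarrow> 'a::real_normed_vector) \<Rightarrow> complex^'n \<Rightarrow> complex^'n \<Rightarrow> 'a" where
  "fderiv f x = frechet_derivative f (at x)"

definition holo_map_on :: "(complex^'n) set \<Rightarrow> (complex^'n \<Rightarrow> complex^'k) \<Rightarrow> bool" where
  "holo_map_on N F \<longleftrightarrow> (\<forall>y\<in>N. \<exists>L. (F has_derivative L) (at y) \<and> (\<forall>w. L (\<i> *s w) = \<i> *s L w))"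

lemma scaleR_eq_smult_of_real: "(r::real) *\<^sub>R (a::complex^'n) = complex_of_real r *s a"
  unfolding vec_eq_iff vector_scaleR_component vector_smult_component by (simp add: scaleR_conv_of_real)

lemma smult_eq_Re_Im: "(c::complex) *s (v::complex^'n) = Re c *\<^sub>R v + Im c *\<^sub>R (\<i> *s v)"
proof -
  have c: "c = of_real (Re c) + \<i> * of_real (Im c)" by (simp add: complex_eq)
  show ?thesis
    unfolding vec_eq_iff vector_scaleR_component vector_add_component vector_smult_component
    by (simp only: scaleR_conv_of_real) (subst c, simp add: algebra_simps)
qed

lemma smult_sum_vec: "(c::complex) *s (\<Sum>i\<in>I. f i) = (\<Sum>i\<in>I. c *s (f i :: complex^'n))"
  by (simp add: vec_eq_iff sum_distrib_left)

lemma norm_smult_vec: "norm (c *s (v::complex^'n)) = norm c * norm v"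
  unfolding norm_vec_def by (simp add: norm_mult L2_set_right_distrib)

lemma bounded_linear_smult_vec: "bounded_linear (\<lambda>c::complex. c *s (v::complex^'n))"
proof -
  have "linear (\<lambda>c::complex. c *s v)"
  proof (rule linearI)
    fix b c :: complex show "(b + c) *s v = b *s v + c *s v" by simp
  next
    fix r :: real and b :: complex
    show "(r *\<^sub>R b) *s v = r *\<^sub>R (b *s v)"
      unfolding vec_eq_iff vector_scaleR_component vector_smult_component by simp
  qed
  then show ?thesis by (simp add: linear_conv_bounded_linear)
qed

lemma complex_homogeneous_if_i_homogeneous:
  assumes "linear L" "\<And>v. L (\<i> *s v) = \<i> * L v"
  shows "L (c *s v) = (c::complex) * L (v::complex^'n)"
proof -
  interpret linear L by fact
  have "L (c *s v) = Re c *\<^sub>R L v + Im c *\<^sub>R (\<i> * L v)"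
    by (subst smult_eq_Re_Im) (simp only: add scale assms(2))
  also have "\<dots> = Re c * L v + Im c * (\<i> * L v)" by (simp add: scaleR_conv_of_real)
  also have "\<dots> = c * L v" by (subst (3) complex_eq) (simp add: algebra_simps)
  finally show ?thesis .
qed

lemma fderiv_eqI: "(f has_derivative L) (at x) \<Longrightarrow> fderiv f x = L"
  unfolding fderiv_def by (rule frechet_derivative_at[symmetric])

lemma cholo_onI:
  assumes "\<And>x. x \<in> N \<Longrightarrow> (f has_derivative L x) (at x)"
    and "\<And>x v. x \<in> N \<Longrightarrow> L x (\<i> *s v) = \<i> * L x v"
  shows "cholo_on N f"
  using assms unfolding cholo_on_def by blast

lemma cholo_on_has_derivative:
  assumes "cholo_on N f" "x \<in> N"
  shows "(f has_derivative fderiv f x) (at x)"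
proof -
  obtain L where "(f has_derivative L) (at x)" using assms unfolding cholo_on_def by blast
  then show ?thesis using fderiv_eqI by metis
qed

lemma cholo_on_fderiv_smult:
  assumes "cholo_on N f" "x \<in> N"
  shows "fderiv f x (c *s v) = c * fderiv f x v"
proof -
  obtain L where L: "(f has_derivative L) (at x)" "\<And>v. L (\<i> *s v) = \<i> * L v"
    using assms unfolding cholo_on_def by blast
  have "L (c *s v) = c * L v"
    using complex_homogeneous_if_i_homogeneous[of L c v] has_derivative_linear[OF L(1)] L(2) by blast
  then show ?thesis using fderiv_eqI[OF L(1)] by simp
qed

lemma cholo_on_bounded_linear: "cholo_on N f \<Longrightarrow> x \<in> N \<Longrightarrow> bounded_linear (fderiv f x)"
  using cholo_on_has_derivative has_derivative_bounded_linear by blast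

lemma cholo_on_subset: "cholo_on N f \<Longrightarrow> M \<subseteq> N \<Longrightarrow> cholo_on M f"
  unfolding cholo_on_def by blast

lemma cholo_on_continuous_on: "cholo_on N f \<Longrightarrow> continuous_on N f"
  by (meson cholo_on_has_derivative continuous_at_imp_continuous_on has_derivative_continuous)

lemma cholo_on_const: "cholo_on N (\<lambda>z. c)"
  by (rule cholo_onI[where L="\<lambda>x h. 0"]) auto

lemma cholo_on_diff: "cholo_on N f \<Longrightarrow> cholo_on N g \<Longrightarrow> cholo_on N (\<lambda>z. f z - g z)"
  by (rule cholo_onI[where L="\<lambda>x h. fderiv f x h - fderiv g x h"])
     (auto intro!: has_derivative_diff cholo_on_has_derivative simp: cholo_on_fderiv_smult algebra_simps)

lemma cholo_on_mult: "cholo_on N f \<Longrightarrow> cholo_on N g \<Longrightarrow> cholo_on N (\<lambda>z. f z * g z)"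
  by (rule cholo_onI[where L="\<lambda>x h. f x * fderiv g x h + fderiv f x h * g x"])
     (blast intro: has_derivative_mult cholo_on_has_derivative,
      simp add: cholo_on_fderiv_smult algebra_simps)

lemma cholo_on_sum: "(\<And>i. i \<in> I \<Longrightarrow> cholo_on N (f i)) \<Longrightarrow> cholo_on N (\<lambda>z. \<Sum>i\<in>I. f i z)"
proof (rule cholo_onI[where L="\<lambda>x h. \<Sum>i\<in>I. fderiv (f i) x h"])
  fix x v assume "x \<in> N" and f: "\<And>i. i \<in> I \<Longrightarrow> cholo_on N (f i)"
  then show "((\<lambda>z. \<Sum>i\<in>I. f i z) has_derivative (\<lambda>h. \<Sum>i\<in>I. fderiv (f i) x h)) (at x)"
    by (auto intro!: has_derivative_sum cholo_on_has_derivative)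
  show "(\<Sum>i\<in>I. fderiv (f i) x (\<i> *s v)) = \<i> * (\<Sum>i\<in>I. fderiv (f i) x v)"
    unfolding sum_distrib_left using \<open>x \<in> N\<close> f by (intro sum.cong refl cholo_on_fderiv_smult)
qed

lemma holo_map_on_subset: "holo_map_on N F \<Longrightarrow> M \<subseteq> N \<Longrightarrow> holo_map_on M F"
  unfolding holo_map_on_def by blast

lemma fderiv_compose:
  assumes "cholo_on M f" "(F has_derivative L) (at x)" "F x \<in> M"
  shows "fderiv (\<lambda>z. f (F z)) x = (\<lambda>w. fderiv f (F x) (L w))"
  using has_derivative_compose[OF assms(2) cholo_on_has_derivative[OF assms(1,3)]] by (rule fderiv_eqI)

lemma cholo_on_compose:
  assumes f: "cholo_on M f" and F: "holo_map_on N F" and "F ` N \<subseteq> M"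
  shows "cholo_on N (\<lambda>z. f (F z))"
  unfolding cholo_on_def
proof
  fix x assume x: "x \<in> N"
  obtain L where L: "(F has_derivative L) (at x)" "\<And>w. L (\<i> *s w) = \<i> *s L w"
    using F x unfolding holo_map_on_def by blast
  have "F x \<in> M" using assms(3) x by auto
  then show "\<exists>L'. ((\<lambda>z. f (F z)) has_derivative L') (at x) \<and> (\<forall>v. L' (\<i> *s v) = \<i> * L' v)"
    using has_derivative_compose[OF L(1) cholo_on_has_derivative[OF f]] L(2) cholo_on_fderiv_smult[OF f]
    by (intro exI[of _ "\<lambda>w. fderiv f (F x) (L w)"]) simp
qed

lemma fderiv_component:
  fixes F :: "complex^'n \<Rightarrow> complex^'k"
  assumes "(F has_derivative L) (at x)"
  shows "fderiv (\<lambda>z. (F z) $ j) x = (\<lambda>w. (L w) $ j)"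
  using has_derivative_compose[OF assms bounded_linear_imp_has_derivative[OF bounded_linear_vec_nth]]
  by (rule fderiv_eqI)

lemma cholo_on_component:
  fixes F :: "complex^'n \<Rightarrow> complex^'k"
  assumes "holo_map_on N F"
  shows "cholo_on N (\<lambda>z. (F z) $ j)"
  unfolding cholo_on_def
proof
  fix x assume "x \<in> N"
  then obtain L where L: "(F has_derivative L) (at x)" "\<And>w. L (\<i> *s w) = \<i> *s L w"
    using assms unfolding holo_map_on_def by blast
  then show "\<exists>L'. ((\<lambda>z. (F z) $ j) has_derivative L') (at x) \<and> (\<forall>v. L' (\<i> *s v) = \<i> * L' v)"
    using has_derivative_compose[OF L(1) bounded_linear_imp_has_derivative[OF bounded_linear_vec_nth]]
    by (intro exI[of _ "\<lambda>w. (L w) $ j"]) simp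
qed

lemma has_field_derivative_line:
  assumes "cholo_on N f" "z + t0 *s v \<in> N"
  shows "((\<lambda>t. f (z + t *s v)) has_field_derivative fderiv f (z + t0 *s v) v) (at t0)"
proof -
  have "((\<lambda>t::complex. z + t *s v) has_derivative (\<lambda>c. c *s v)) (at t0)"
    using has_derivative_add[OF has_derivative_const bounded_linear_imp_has_derivative[OF bounded_linear_smult_vec]]
    by simp
  from has_derivative_compose[OF this cholo_on_has_derivative[OF assms]]
  have "((\<lambda>t. f (z + t *s v)) has_derivative (\<lambda>c. fderiv f (z + t0 *s v) (c *s v))) (at t0)" .
  moreover have "(\<lambda>c. fderiv f (z + t0 *s v) (c *s v)) = (*) (fderiv f (z + t0 *s v) v)"
    using cholo_on_fderiv_smult[OF assms] by (auto simp: mult.commute)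
  ultimately show ?thesis unfolding has_field_derivative_def by simp
qed

lemma line_in_cball:
  assumes "norm t \<le> e / (2 * (norm v + 1))" "dist z y \<le> e / 2"
  shows "y + t *s (v::complex^'n) \<in> cball z e"
proof -
  have pos: "2 * (norm v + 1) > 0" by (simp add: add_nonneg_pos)
  have "norm (t *s v) = norm t * norm v" by (rule norm_smult_vec)
  also have "\<dots> \<le> e / (2 * (norm v + 1)) * (norm v + 1)"
    using assms(1) order_trans[OF norm_ge_zero assms(1)] by (intro mult_mono) auto
  also have "\<dots> = e / 2" using pos by (simp add: field_simps)
  finally have "norm (t *s v) \<le> e / 2" .
  moreover have "dist z (y + t *s v) \<le> dist z y + norm (t *s v)"
    by (metis dist_norm dist_triangle_le add_diff_cancel_left' norm_minus_commute order_refl)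
  ultimately show ?thesis using assms(2) by simp
qed

lemma has_contour_integral_line_div_square:
  assumes f: "cholo_on N f" and r: "r > 0" and line: "\<And>t. norm t \<le> r \<Longrightarrow> z + t *s v \<in> N"
  shows "((\<lambda>t. f (z + t *s v) / t^2) has_contour_integral (2 * complex_of_real pi * \<i> * fderiv f z v))
           (circlepath 0 r)"
proof -
  let ?g = "\<lambda>t. f (z + t *s v)"
  have d: "(?g has_field_derivative fderiv f (z + t *s v) v) (at t)" if "t \<in> cball 0 r" for t
    using has_field_derivative_line[OF f line] that by simp
  have "continuous_on (cball 0 r) ?g"
    using DERIV_isCont[OF d] by (simp add: continuous_at_imp_continuous_on)
  moreover have "?g holomorphic_on ball 0 r"
    unfolding holomorphic_on_def field_differentiable_def
    using d by (meson ball_subset_cball has_field_derivative_at_within subsetD)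
  moreover have "deriv ?g 0 = fderiv f z v"
    using d[of 0] r by (simp add: DERIV_imp_deriv)
  ultimately show ?thesis
    using Cauchy_has_contour_integral_higher_derivative_circlepath[of 0 r ?g 0 1] r
    by (simp add: mult.assoc power2_eq_square)
qed

lemma circlepath_integral_div_square_bound:
  assumes "((\<lambda>t. g t / t^2) has_contour_integral (2 * complex_of_real pi * \<i> * X)) (circlepath 0 r)"
    and "r > 0" and B: "\<And>t. norm t = r \<Longrightarrow> norm (g t) \<le> B"
  shows "norm X \<le> B / r"
proof -
  have "norm (g (complex_of_real r)) \<le> B" using B \<open>r > 0\<close> by simp
  then have "B \<ge> 0" using norm_ge_zero order_trans by blast
  have "norm (2 * complex_of_real pi * \<i> * X) \<le> (B / r^2) * (2 * pi * r)"
  proof (rule has_contour_integral_bound_circlepath[OF assms(1)])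
    fix t :: complex assume "norm (t - 0) = r"
    then show "norm (g t / t^2) \<le> B / r^2"
      using B[of t] by (simp add: norm_divide norm_power divide_right_mono)
  qed (use assms \<open>B \<ge> 0\<close> in auto)
  then have "2 * pi * norm X \<le> 2 * pi * (B / r)"
    using \<open>r > 0\<close> by (simp add: norm_mult power2_eq_square field_simps)
  moreover have "2 * pi > 0" using pi_gt_zero by simp
  ultimately show ?thesis by (metis mult.assoc mult_le_cancel_left_pos)
qed

text \<open>By Cauchy's formula \<open>Df z v\<close> is a circle integral of \<open>f\<close> along the line \<open>z + t v\<close>, so it inherits
  the uniform continuity of \<open>f\<close>.\<close>

lemma continuous_on_fderiv_apply:
  assumes f: "cholo_on N f" and "open N"
  shows "continuous_on N (\<lambda>z. fderiv f z v)"
  unfolding continuous_on_iff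
proof (intro ballI allI impI)
  fix z0 \<epsilon> assume z0: "z0 \<in> N" and "(\<epsilon>::real) > 0"
  obtain e where e: "e > 0" "cball z0 e \<subseteq> N" using assms(2) z0 open_contains_cball by blast
  define r where "r = e / (2 * (norm v + 1))"
  have r: "r > 0" using e unfolding r_def by (simp add: add_nonneg_pos)
  have "uniformly_continuous_on (cball z0 e) f"
    using cholo_on_continuous_on[OF f] e(2) by (intro compact_uniformly_continuous) (auto intro: continuous_on_subset)
  then obtain d where d: "d > 0" "\<And>x x'. x \<in> cball z0 e \<Longrightarrow> x' \<in> cball z0 e \<Longrightarrow> dist x' x < d
      \<Longrightarrow> dist (f x') (f x) < \<epsilon> * r / 2"
    unfolding uniformly_continuous_on_def using \<open>\<epsilon> > 0\<close> r by (metis half_gt_zero mult_pos_pos)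
  show "\<exists>\<delta>>0. \<forall>z\<in>N. dist z z0 < \<delta> \<longrightarrow> dist (fderiv f z v) (fderiv f z0 v) < \<epsilon>"
  proof (intro exI[of _ "min d (e/2)"] conjI ballI impI)
    fix z assume "z \<in> N" "dist z z0 < min d (e/2)"
    then have zd: "dist z z0 < d" "dist z0 z \<le> e/2" by (auto simp: dist_commute)
    have inK: "z + t *s v \<in> cball z0 e" "z0 + t *s v \<in> cball z0 e" if "norm t \<le> r" for t
      using line_in_cball[of t e v] that zd e unfolding r_def by auto
    have "((\<lambda>t. (f (z + t *s v) - f (z0 + t *s v)) / t^2) has_contour_integral
            (2 * complex_of_real pi * \<i> * (fderiv f z v - fderiv f z0 v))) (circlepath 0 r)"
      using has_contour_integral_diff[OF has_contour_integral_line_div_square[OF f r]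
          has_contour_integral_line_div_square[OF f r]] inK e(2)
      by (simp add: diff_divide_distrib right_diff_distrib subset_iff)
    then have "norm (fderiv f z v - fderiv f z0 v) \<le> (\<epsilon> * r / 2) / r"
    proof (rule circlepath_integral_div_square_bound[OF _ r])
      fix t :: complex assume "norm t = r"
      then have t: "norm t \<le> r" by simp
      have "dist (z + t *s v) (z0 + t *s v) < d" using zd by (simp add: dist_norm)
      from d(2)[OF inK(2)[OF t] inK(1)[OF t] this]
      show "norm (f (z + t *s v) - f (z0 + t *s v)) \<le> \<epsilon> * r / 2" by (simp add: dist_norm)
    qed
    also have "\<dots> < \<epsilon>" using r \<open>\<epsilon> > 0\<close> by simp
    finally show "dist (fderiv f z v) (fderiv f z0 v) < \<epsilon>" by (simp add: dist_norm)
  qed (use d e in simp)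
qed

lemma continuous_on_Blinfun_fderiv:
  fixes f :: "complex^'n \<Rightarrow> complex"
  assumes "cholo_on N f" "open N"
  shows "continuous_on N (\<lambda>z. Blinfun (fderiv f z))"
proof (rule continuous_on_blinfun_componentwise)
  fix i :: "complex^'n" assume "i \<in> Basis"
  show "continuous_on N (\<lambda>z. blinfun_apply (Blinfun (fderiv f z)) i)"
    using continuous_on_fderiv_apply[OF assms, of i]
    by (rule continuous_on_eq) (simp add: bounded_linear_Blinfun_apply cholo_on_bounded_linear[OF assms(1)])
qed

lemma fderiv_remainder_bound:
  fixes f :: "complex^'n \<Rightarrow> complex"
  assumes f: "cholo_on N f" and K: "convex K" "K \<subseteq> N" "p \<in> K" "p + h \<in> K"
    and B: "\<And>q. q \<in> K \<Longrightarrow> dist q p \<le> norm h \<Longrightarrow> norm (Blinfun (fderiv f q) - Blinfun (fderiv f p)) \<le> \<epsilon>"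
  shows "norm (f (p + h) - f p - fderiv f p h) \<le> \<epsilon> * norm h"
proof -
  let ?S = "closed_segment p (p + h)"
  have SK: "?S \<subseteq> K" using K closed_segment_subset by blast
  have pN: "p \<in> N" using K by auto
  interpret L: bounded_linear "fderiv f p" using cholo_on_bounded_linear[OF f pN] .
  have der: "((\<lambda>x. f x - fderiv f p x) has_derivative (\<lambda>y. fderiv f q y - fderiv f p y)) (at q within ?S)"
    if "q \<in> ?S" for q
  proof -
    have "q \<in> N" using that SK K(2) by blast
    from has_derivative_diff[OF cholo_on_has_derivative[OF f this]
        bounded_linear_imp_has_derivative[OF L.bounded_linear]]
    show ?thesis by (rule has_derivative_at_withinI)
  qed
  have "onorm (\<lambda>y. fderiv f q y - fderiv f p y) \<le> \<epsilon>" if q: "q \<in> ?S" for q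
  proof -
    have qK: "q \<in> K" "q \<in> N" using q SK K(2) by blast+
    have "dist q p \<le> dist p (p + h)"
      using q by (metis dist_commute dist_in_closed_segment)
    then have "norm (Blinfun (fderiv f q) - Blinfun (fderiv f p)) \<le> \<epsilon>"
      using B[OF qK(1)] by (simp add: dist_norm)
    moreover have "(\<lambda>y. fderiv f q y - fderiv f p y) = blinfun_apply (Blinfun (fderiv f q) - Blinfun (fderiv f p))"
      using qK(2) pN
      by (auto simp: blinfun.diff_left bounded_linear_Blinfun_apply[OF cholo_on_bounded_linear[OF f]])
    ultimately show ?thesis by (simp add: norm_blinfun.rep_eq)
  qed
  from differentiable_bound[OF convex_closed_segment der this, of "p + h" p]
  show ?thesis by (simp add: L.add algebra_simps)
qed

lemma circle_integral_fderiv: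
  fixes f :: "complex^'n \<Rightarrow> complex"
  assumes f: "cholo_on N f" "open N" and r: "r > 0" and circ: "\<And>t. norm t = r \<Longrightarrow> z + t *s v \<in> N"
  defines "I \<equiv> \<lambda>w. contour_integral (circlepath 0 r) (\<lambda>t. fderiv f (z + t *s v) w / t^2)"
  shows "((\<lambda>t. fderiv f (z + t *s v) w / t^2) has_contour_integral I w) (circlepath 0 r)"
    and "I (a + b) = I a + I b"
    and "I (c *s a) = c * I a"
proof -
  have sph: "path_image (circlepath 0 r) = sphere 0 r" using r by (simp add: path_image_circlepath)
  have I: "((\<lambda>t. fderiv f (z + t *s v) w / t^2) has_contour_integral I w) (circlepath 0 r)" for w
    unfolding I_def
  proof (rule has_contour_integral_integral, rule contour_integrable_continuous_circlepath)
    have "continuous_on (sphere 0 r) (\<lambda>t. z + t *s v)"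
      by (intro continuous_intros bounded_linear.continuous_on[OF bounded_linear_smult_vec])
    then have "continuous_on (sphere 0 r) (\<lambda>t. fderiv f (z + t *s v) w)"
      using circ by (intro continuous_on_compose2[OF continuous_on_fderiv_apply[OF f]]) auto
    then show "continuous_on (path_image (circlepath 0 r)) (\<lambda>t. fderiv f (z + t *s v) w / t^2)"
      unfolding sph using r by (intro continuous_intros) auto
  qed
  then show "((\<lambda>t. fderiv f (z + t *s v) w / t^2) has_contour_integral I w) (circlepath 0 r)" .
  have lin: "fderiv f (z + t *s v) (a + b) = fderiv f (z + t *s v) a + fderiv f (z + t *s v) b"
    "fderiv f (z + t *s v) (c *s a) = c * fderiv f (z + t *s v) a"
    if "t \<in> path_image (circlepath 0 r)" for t a b c
  proof -
    have tN: "z + t *s v \<in> N" using circ that sph r by auto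
    show "fderiv f (z + t *s v) (a + b) = fderiv f (z + t *s v) a + fderiv f (z + t *s v) b"
      using cholo_on_bounded_linear[OF f(1) tN] by (simp add: linear_simps)
    show "fderiv f (z + t *s v) (c *s a) = c * fderiv f (z + t *s v) a"
      using cholo_on_fderiv_smult[OF f(1) tN] .
  qed
  have "((\<lambda>t. fderiv f (z + t *s v) (a + b) / t^2) has_contour_integral (I a + I b)) (circlepath 0 r)"
    by (rule has_contour_integral_eq[OF has_contour_integral_add[OF I I]]) (simp add: lin add_divide_distrib)
  then show "I (a + b) = I a + I b" using I has_contour_integral_unique by blast
  have "((\<lambda>t. fderiv f (z + t *s v) (c *s a) / t^2) has_contour_integral (c * I a)) (circlepath 0 r)"
    by (rule has_contour_integral_eq[OF has_contour_integral_lmul[OF I]]) (simp add: lin)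
  then show "I (c *s a) = c * I a" using I has_contour_integral_unique by blast
qed

lemma fderiv_apply_increment_bound:
  fixes f :: "complex^'n \<Rightarrow> complex"
  assumes f: "cholo_on N f" "open N" and K: "cball z0 e \<subseteq> N"
    and r: "r = e / (2 * (norm v + 1))" "r > 0" and y: "dist z0 y \<le> e / 2"
    and close: "\<And>p q. p \<in> cball z0 e \<Longrightarrow> q \<in> cball z0 e \<Longrightarrow> dist q p \<le> norm (y - z0)
                  \<Longrightarrow> norm (Blinfun (fderiv f q) - Blinfun (fderiv f p)) \<le> \<delta>"
  shows "norm (fderiv f y v - fderiv f z0 v
           - contour_integral (circlepath 0 r) (\<lambda>t. fderiv f (z0 + t *s v) (y - z0) / t^2)
               / (2 * complex_of_real pi * \<i>)) \<le> \<delta> * norm (y - z0) / r"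
proof -
  let ?h = "y - z0"
  have inK: "x + t *s v \<in> cball z0 e" if "norm t \<le> r" "dist z0 x \<le> e/2" for t x
    using line_in_cball that r(1) by simp
  have z0: "dist z0 z0 \<le> e/2" using order_trans[OF zero_le_dist y] by simp
  have line: "y + t *s v \<in> N" "z0 + t *s v \<in> N" if "norm t \<le> r" for t
    using inK[OF that y] inK[OF that z0] K by auto
  have "((\<lambda>t. (f (y + t *s v) - f (z0 + t *s v) - fderiv f (z0 + t *s v) ?h) / t^2) has_contour_integral
      (2 * complex_of_real pi * \<i> * (fderiv f y v - fderiv f z0 v
         - contour_integral (circlepath 0 r) (\<lambda>t. fderiv f (z0 + t *s v) ?h / t^2) / (2 * complex_of_real pi * \<i>))))
      (circlepath 0 r)"
    using has_contour_integral_diff[OF has_contour_integral_diff[OF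
        has_contour_integral_line_div_square[OF f(1) r(2) line(1)]
        has_contour_integral_line_div_square[OF f(1) r(2) line(2)]]
        circle_integral_fderiv(1)[OF f r(2) line(2), of ?h]]
    by (simp add: diff_divide_distrib right_diff_distrib)
  then show ?thesis
  proof (rule circlepath_integral_div_square_bound[OF _ r(2)])
    fix t :: complex assume "norm t = r"
    then have t: "norm t \<le> r" by simp
    let ?p = "z0 + t *s v"
    have p: "?p \<in> cball z0 e" "?p + ?h \<in> cball z0 e"
      using inK[OF t z0] inK[OF t y] by (auto simp: algebra_simps)
    have "norm (f (?p + ?h) - f ?p - fderiv f ?p ?h) \<le> \<delta> * norm ?h"
      using close[OF p(1)] by (intro fderiv_remainder_bound[OF f(1) convex_cball K p]) auto
    then show "norm (f (y + t *s v) - f (z0 + t *s v) - fderiv f (z0 + t *s v) ?h) \<le> \<delta> * norm ?h"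
      by (simp add: algebra_simps)
  qed
qed

text \<open>Cauchy's formula for \<open>\<partial>f/\<partial>v\<close> along complex lines turns the uniform continuity of \<open>Df\<close>
  into differentiability of \<open>z \<mapsto> Df z v\<close>.\<close>

lemma has_derivative_fderiv_apply:
  fixes f :: "complex^'n \<Rightarrow> complex"
  assumes f: "cholo_on N f" "open N" and e: "e > 0" "cball z0 e \<subseteq> N"
    and r: "r = e / (2 * (norm v + 1))"
  defines "L \<equiv> \<lambda>w. contour_integral (circlepath 0 r) (\<lambda>t. fderiv f (z0 + t *s v) w / t^2)
                      / (2 * complex_of_real pi * \<i>)"
  shows "((\<lambda>z. fderiv f z v) has_derivative L) (at z0)" and "L (c *s w) = c * L w"
proof -
  have r0: "r > 0" using e r by (simp add: add_nonneg_pos)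
  have "dist z0 z0 \<le> e / 2" using e by simp
  then have circ: "z0 + t *s v \<in> N" if "norm t = r" for t
    using line_in_cball[of t e v z0 z0] that e r by auto
  note I = circle_integral_fderiv[OF f r0 circ]
  show "L (c *s w) = c * L w" using I(3) by (simp add: L_def)
  have "linear L"
    by (rule linearI) (simp_all add: L_def I(2) scaleR_eq_smult_of_real I(3) add_divide_distrib scaleR_conv_of_real)
  then have blL: "bounded_linear L" by (simp add: linear_conv_bounded_linear)
  show "((\<lambda>z. fderiv f z v) has_derivative L) (at z0)"
    unfolding has_derivative_at_alt
  proof (intro conjI blL allI impI)
    fix \<epsilon> :: real assume "\<epsilon> > 0"
    have "uniformly_continuous_on (cball z0 e) (\<lambda>z. Blinfun (fderiv f z))"
      by (intro compact_uniformly_continuous continuous_on_subset[OF continuous_on_Blinfun_fderiv[OF f] e(2)]) auto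
    then obtain d where d: "d > 0" "\<And>x x'. x \<in> cball z0 e \<Longrightarrow> x' \<in> cball z0 e \<Longrightarrow> dist x' x < d
        \<Longrightarrow> dist (Blinfun (fderiv f x')) (Blinfun (fderiv f x)) < \<epsilon> * r"
      unfolding uniformly_continuous_on_def using \<open>\<epsilon> > 0\<close> r0 by (metis mult_pos_pos)
    show "\<exists>d>0. \<forall>y. norm (y - z0) < d \<longrightarrow>
        norm (fderiv f y v - fderiv f z0 v - L (y - z0)) \<le> \<epsilon> * norm (y - z0)"
    proof (intro exI[of _ "min d (e/2)"] conjI allI impI)
      fix y assume "norm (y - z0) < min d (e/2)"
      then have yd: "norm (y - z0) < d" "dist z0 y \<le> e/2" by (auto simp: dist_norm norm_minus_commute)
      have "norm (fderiv f y v - fderiv f z0 v - L (y - z0)) \<le> \<epsilon> * r * norm (y - z0) / r"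
        unfolding L_def
      proof (rule fderiv_apply_increment_bound[OF f e(2) r r0 yd(2)])
        fix p q assume "p \<in> cball z0 e" "q \<in> cball z0 e" "dist q p \<le> norm (y - z0)"
        then show "norm (Blinfun (fderiv f q) - Blinfun (fderiv f p)) \<le> \<epsilon> * r"
          using d(2)[of p q] yd(1) by (simp add: dist_norm)
      qed
      then show "norm (fderiv f y v - fderiv f z0 v - L (y - z0)) \<le> \<epsilon> * norm (y - z0)"
        using r0 by simp
    qed (use d e in simp)
  qed
qed

lemma cholo_on_fderiv_apply:
  fixes f :: "complex^'n \<Rightarrow> complex"
  assumes "cholo_on N f" "open N"
  shows "cholo_on N (\<lambda>z. fderiv f z v)"
  unfolding cholo_on_def
proof
  fix z0 assume "z0 \<in> N"
  then obtain e where "e > 0" "cball z0 e \<subseteq> N" using assms(2) open_contains_cball by blast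
  from has_derivative_fderiv_apply[OF assms this refl]
  show "\<exists>L. ((\<lambda>z. fderiv f z v) has_derivative L) (at z0) \<and> (\<forall>w. L (\<i> *s w) = \<i> * L w)"
    by blast
qed

text \<open>The Cauchy integral computing the left-hand side is also Cauchy's formula for the derivative of
  \<open>q \<mapsto> Dg q b\<close> along \<open>a\<close>.\<close>

lemma fderiv_fderiv_apply_commute:
  fixes g :: "complex^'n \<Rightarrow> complex"
  assumes g: "cholo_on N g" "open N" and "p \<in> N"
  shows "fderiv (\<lambda>q. fderiv g q a) p b = fderiv (\<lambda>q. fderiv g q b) p a"
proof -
  obtain e where e: "e > 0" "cball p e \<subseteq> N" using assms open_contains_cball by blast
  define r where "r = e / (2 * (norm a + 1))"
  have r: "r > 0" using e unfolding r_def by (simp add: add_nonneg_pos)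
  have line: "p + t *s a \<in> N" if "norm t \<le> r" for t
    using line_in_cball[of t e a p p] that e unfolding r_def by auto
  have "fderiv (\<lambda>q. fderiv g q a) p b
      = contour_integral (circlepath 0 r) (\<lambda>t. fderiv g (p + t *s a) b / t^2) / (2 * complex_of_real pi * \<i>)"
    using fderiv_eqI[OF has_derivative_fderiv_apply(1)[OF g e r_def]] by simp
  also have "contour_integral (circlepath 0 r) (\<lambda>t. fderiv g (p + t *s a) b / t^2)
      = 2 * complex_of_real pi * \<i> * fderiv (\<lambda>q. fderiv g q b) p a"
    by (rule contour_integral_unique[OF has_contour_integral_line_div_square[OF cholo_on_fderiv_apply[OF g] r line]])
  finally show ?thesis by simp
qed

lemma fderiv_transform_open:
  assumes "open V" "p \<in> V" "\<And>q. q \<in> V \<Longrightarrow> f q = g q"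
  shows "fderiv f p = fderiv g p"
proof -
  have "(f has_derivative L) (at p) \<longleftrightarrow> (g has_derivative L) (at p)" for L
    using assms has_derivative_transform_within_open[of f L p UNIV V g]
      has_derivative_transform_within_open[of g L p UNIV V f] by auto
  then show ?thesis unfolding fderiv_def frechet_derivative_def by simp
qed

lemma cholo_on_transform_open:
  assumes "open V" "cholo_on V f" "\<And>q. q \<in> V \<Longrightarrow> f q = g q"
  shows "cholo_on V g"
  unfolding cholo_on_def
proof
  fix p assume "p \<in> V"
  then obtain L where L: "(f has_derivative L) (at p)" "\<forall>v. L (\<i> *s v) = \<i> * L v"
    using assms(2) unfolding cholo_on_def by blast
  have "(g has_derivative L) (at p)"
    by (rule has_derivative_transform_within_open[OF L(1) assms(1) \<open>p \<in> V\<close>]) (simp add: assms(3))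
  then show "\<exists>L. (g has_derivative L) (at p) \<and> (\<forall>v. L (\<i> *s v) = \<i> * L v)"
    using L(2) by blast
qed

lemma fderiv_zero_along_line:
  assumes f: "cholo_on V f" and "open V" "p \<in> V"
    and zero: "\<And>t. p + t *s v \<in> V \<Longrightarrow> f (p + t *s v) = 0"
  shows "fderiv f p v = 0"
proof -
  have "((\<lambda>t. f (p + t *s v)) has_field_derivative fderiv f (p + 0 *s v) v) (at 0)"
    by (rule has_field_derivative_line[OF f]) (simp add: \<open>p \<in> V\<close>)
  moreover have "((\<lambda>t. f (p + t *s v)) has_field_derivative 0) (at 0)"
  proof (rule has_field_derivative_transform_within_open[OF DERIV_const])
    have "continuous_on UNIV (\<lambda>t. p + t *s v)"
      by (intro continuous_intros bounded_linear.continuous_on[OF bounded_linear_smult_vec])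
    then show "open {t. p + t *s v \<in> V}"
      using open_vimage[OF \<open>open V\<close>] by (simp add: vimage_def)
  qed (use \<open>p \<in> V\<close> zero in auto)
  ultimately show ?thesis using DERIV_unique by fastforce
qed

lemma iterated_line_derivatives_zero_imp_zero:
  fixes G :: "nat \<Rightarrow> complex^'n \<Rightarrow> complex"
  assumes holo: "\<And>m. cholo_on V (G m)" and G_Suc: "\<And>m w. G (Suc m) w = fderiv (G m) w a"
    and V: "ball w0 \<rho> \<subseteq> V" and zero: "\<And>m. G m w0 = 0" and a: "norm a < \<rho>"
  shows "G 0 (w0 + a) = 0"
proof (cases "a = 0")
  case True
  then show ?thesis using zero by simp
next
  case False
  define R where "R = \<rho> / norm a"
  have R1: "1 < R" unfolding R_def using a False by simp
  define \<phi> where "\<phi> t = G 0 (w0 + t *s a)" for t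
  have line: "w0 + t *s a \<in> V" if "t \<in> ball 0 R" for t
  proof -
    have "norm (t *s a) < \<rho>"
      using that False by (simp add: norm_smult_vec R_def pos_less_divide_eq)
    then show ?thesis using V by (auto simp: dist_norm)
  qed
  have "(deriv ^^ m) \<phi> t = G m (w0 + t *s a)" if "t \<in> ball 0 R" for m t
    using that
  proof (induction m arbitrary: t)
    case 0
    then show ?case by (simp add: \<phi>_def)
  next
    case (Suc m)
    have "((deriv ^^ m) \<phi> has_field_derivative fderiv (G m) (w0 + t *s a) a) (at t)"
      by (rule has_field_derivative_transform_within_open[OF has_field_derivative_line[OF holo line]
            open_ball Suc.prems]) (use Suc.prems Suc.IH in simp_all)
    then show ?case by (simp add: DERIV_imp_deriv G_Suc)
  qed
  then have "(deriv ^^ m) \<phi> 0 = 0" for m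
    using R1 zero by simp
  moreover have "\<phi> holomorphic_on ball 0 R"
    unfolding holomorphic_on_def field_differentiable_def \<phi>_def
    using has_field_derivative_line[OF holo line] by (blast intro: has_field_derivative_at_within)
  ultimately have "\<phi> 1 = 0"
    using holomorphic_fun_eq_0_on_ball[of \<phi> 0 R 1] R1 by simp
  then show ?thesis by (simp add: \<phi>_def)
qed

section \<open>Flattening a family of holomorphic functions\<close>

lemma complex_linear_sum_dual:
  fixes l :: "complex^'n \<Rightarrow> complex" and u :: "nat \<Rightarrow> complex^'n"
  assumes "linear l" "\<And>c v. l (c *s v) = c * l v"
    and "i < r" "\<And>k. k < r \<Longrightarrow> l (u k) = (if i = k then 1 else 0)"
  shows "l (\<Sum>k<r. c k *s u k) = c i"
proof -
  have "l (\<Sum>k<r. c k *s u k) = (\<Sum>k<r. if k = i then c k else 0)"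
    unfolding linear_sum[OF assms(1)] by (rule sum.cong) (auto simp: assms(2,4))
  also have "\<dots> = c i" using assms(3) by simp
  finally show ?thesis .
qed

locale flattening =
  fixes W :: "(complex^'n) set" and x :: "complex^'n" and r :: nat
    and h :: "nat \<Rightarrow> complex^'n \<Rightarrow> complex" and u :: "nat \<Rightarrow> complex^'n"
  assumes open_W: "open W" and x_in_W: "x \<in> W"
    and holo_h: "\<And>i. i < r \<Longrightarrow> cholo_on W (h i)"
    and dual_u: "\<And>i k. i < r \<Longrightarrow> k < r \<Longrightarrow> fderiv (h i) x (u k) = (if i = k then 1 else 0)"
begin

text \<open>Since \<open>flat_deriv x = id\<close> and \<open>dh\<^sub>i(x) \<circ> flat = h\<^sub>i\<close>, the local inverse of \<open>flat\<close> maps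
  \<open>ker_dh\<close> into the common zero set of the \<open>h\<^sub>i\<close>: it straightens that set.\<close>

definition flat :: "complex^'n \<Rightarrow> complex^'n" where
  "flat z = z + (\<Sum>i<r. (h i z - fderiv (h i) x z) *s u i)"

definition flat_deriv :: "complex^'n \<Rightarrow> complex^'n \<Rightarrow> complex^'n" where
  "flat_deriv z w = w + (\<Sum>i<r. (fderiv (h i) z w - fderiv (h i) x w) *s u i)"

definition ker_dh :: "(complex^'n) set" where
  "ker_dh = {a. \<forall>i<r. fderiv (h i) x a = 0}"

lemma linear_dh_x: "i < r \<Longrightarrow> linear (fderiv (h i) x)"
  using cholo_on_bounded_linear[OF holo_h x_in_W] bounded_linear.linear by blast

lemma dh_x_smult: "i < r \<Longrightarrow> fderiv (h i) x (c *s v) = c * fderiv (h i) x v"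
  using cholo_on_fderiv_smult[OF holo_h x_in_W] .

lemma dh_x_sum_dual: "i < r \<Longrightarrow> fderiv (h i) x (\<Sum>k<r. c k *s u k) = c i"
  by (rule complex_linear_sum_dual[OF linear_dh_x dh_x_smult]) (auto simp: dual_u)

lemma dh_x_flat:
  assumes "i < r"
  shows "fderiv (h i) x (flat z) = h i z"
proof -
  have "fderiv (h i) x (flat z) = fderiv (h i) x z + (h i z - fderiv (h i) x z)"
    unfolding flat_def linear_add[OF linear_dh_x[OF assms]] dh_x_sum_dual[OF assms] ..
  then show ?thesis by simp
qed

lemma dh_x_flat_deriv:
  assumes "i < r"
  shows "fderiv (h i) x (flat_deriv z w) = fderiv (h i) z w"
proof -
  have "fderiv (h i) x (flat_deriv z w) = fderiv (h i) x w + (fderiv (h i) z w - fderiv (h i) x w)"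
    unfolding flat_deriv_def linear_add[OF linear_dh_x[OF assms]] dh_x_sum_dual[OF assms] ..
  then show ?thesis by simp
qed

lemma ker_dh_diff: "a \<in> ker_dh \<Longrightarrow> b \<in> ker_dh \<Longrightarrow> a - b \<in> ker_dh"
  unfolding ker_dh_def using linear_dh_x by (simp add: linear_diff)

lemma ker_dh_add_smult: "a \<in> ker_dh \<Longrightarrow> b \<in> ker_dh \<Longrightarrow> a + t *s b \<in> ker_dh"
  unfolding ker_dh_def using linear_dh_x dh_x_smult by (simp add: linear_add)

lemma flat_in_ker_dh_iff: "flat z \<in> ker_dh \<longleftrightarrow> (\<forall>i<r. h i z = 0)"
  unfolding ker_dh_def using dh_x_flat by simp

lemma flat_deriv_x: "flat_deriv x = id"
  by (auto simp: flat_deriv_def fun_eq_iff)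

lemma has_derivative_flat:
  assumes "z \<in> W"
  shows "(flat has_derivative flat_deriv z) (at z)"
proof -
  have "((\<lambda>z. (h i z - fderiv (h i) x z) *s u i) has_derivative
      (\<lambda>w. (fderiv (h i) z w - fderiv (h i) x w) *s u i)) (at z)" if "i \<in> {..<r}" for i
    using that assms cholo_on_bounded_linear[OF holo_h x_in_W]
    by (intro bounded_linear.has_derivative[OF bounded_linear_smult_vec] has_derivative_diff
        cholo_on_has_derivative[OF holo_h] bounded_linear_imp_has_derivative) auto
  then have "((\<lambda>z. \<Sum>i<r. (h i z - fderiv (h i) x z) *s u i) has_derivative
      (\<lambda>w. \<Sum>i<r. (fderiv (h i) z w - fderiv (h i) x w) *s u i)) (at z)"
    by (rule has_derivative_sum)
  from has_derivative_add[OF has_derivative_ident this]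
  show ?thesis unfolding flat_def[abs_def] flat_deriv_def[abs_def] .
qed

lemma flat_deriv_smult:
  assumes "z \<in> W"
  shows "flat_deriv z (c *s w) = c *s flat_deriv z w"
proof -
  have "flat_deriv z (c *s w) = c *s w + (\<Sum>i<r. c *s ((fderiv (h i) z w - fderiv (h i) x w) *s u i))"
    unfolding flat_deriv_def
    by (intro arg_cong2[where f="(+)"] refl sum.cong)
       (auto simp: cholo_on_fderiv_smult[OF holo_h assms] dh_x_smult vector_smult_assoc right_diff_distrib)
  then show ?thesis unfolding flat_deriv_def by (simp add: smult_sum_vec vector_add_ldistrib)
qed

lemma holo_map_on_flat: "holo_map_on W flat"
  unfolding holo_map_on_def using has_derivative_flat flat_deriv_smult by blast

lemma Blinfun_flat_deriv: "z \<in> W \<Longrightarrow> blinfun_apply (Blinfun (flat_deriv z)) = flat_deriv z"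
  using has_derivative_flat has_derivative_bounded_linear bounded_linear_Blinfun_apply by blast

lemma continuous_on_Blinfun_flat_deriv: "continuous_on W (\<lambda>z. Blinfun (flat_deriv z))"
proof (rule continuous_on_blinfun_componentwise)
  fix b :: "complex^'n" assume "b \<in> Basis"
  have "continuous_on W (\<lambda>z. flat_deriv z b)"
    unfolding flat_deriv_def
    by (intro continuous_intros bounded_linear.continuous_on[OF bounded_linear_smult_vec]
        continuous_on_fderiv_apply[OF holo_h open_W]) auto
  then show "continuous_on W (\<lambda>z. blinfun_apply (Blinfun (flat_deriv z)) b)"
    by (rule continuous_on_eq) (simp add: Blinfun_flat_deriv)
qed

lemma flat_local_inverse:
  obtains U V \<Psi> g' where "open U" "U \<subseteq> W" "x \<in> U" "open V" "flat x \<in> V"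
    "homeomorphism U V flat \<Psi>"
    "\<And>y. y \<in> V \<Longrightarrow> (\<Psi> has_derivative g' y) (at y)"
    "\<And>y b. y \<in> V \<Longrightarrow> flat_deriv (\<Psi> y) (g' y b) = b"
    "\<And>y c w. y \<in> V \<Longrightarrow> g' y (c *s w) = c *s g' y w"
    "g' (flat x) = id"
proof -
  define D where "D z = Blinfun (flat_deriv z)" for z
  have D: "blinfun_apply (D z) = flat_deriv z" if "z \<in> W" for z
    unfolding D_def using Blinfun_flat_deriv[OF that] .
  have "(flat has_derivative blinfun_apply (D z)) (at z)" if "z \<in> W" for z
    using has_derivative_flat[OF that] D[OF that] by simp
  moreover have "continuous_on W D" unfolding D_def by (rule continuous_on_Blinfun_flat_deriv)
  moreover have "id_blinfun o\<^sub>L D x = id_blinfun"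
    by (rule blinfun_eqI) (simp add: D[OF x_in_W] flat_deriv_x)
  ultimately obtain U V \<Psi> g' where U: "open U" "U \<subseteq> W" "x \<in> U" "open V" "flat x \<in> V"
      "homeomorphism U V flat \<Psi>" "\<And>y. y \<in> V \<Longrightarrow> (\<Psi> has_derivative g' y) (at y)"
      and g': "\<And>y. y \<in> V \<Longrightarrow> g' y = inv (blinfun_apply (D (\<Psi> y)))"
        "\<And>y. y \<in> V \<Longrightarrow> bij (blinfun_apply (D (\<Psi> y)))"
    using inverse_function_theorem[OF open_W _ _ x_in_W] by blast
  have \<Psi>W: "\<Psi> y \<in> W" if "y \<in> V" for y
    using U(2,6) that unfolding homeomorphism_def by blast
  have g'_inv: "g' y = inv (flat_deriv (\<Psi> y))" "bij (flat_deriv (\<Psi> y))" if "y \<in> V" for y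
    using g'[OF that] D[OF \<Psi>W[OF that]] by auto
  have right_inv: "flat_deriv (\<Psi> y) (g' y b) = b" if "y \<in> V" for y b
    using g'_inv[OF that] by (simp add: bij_is_surj surj_f_inv_f)
  have g'_smult: "g' y (c *s w) = c *s g' y w" if y: "y \<in> V" for y c w
  proof -
    have "flat_deriv (\<Psi> y) (c *s g' y w) = c *s w"
      using flat_deriv_smult[OF \<Psi>W[OF y]] right_inv[OF y] by simp
    then show ?thesis using g'_inv[OF y] by (metis bij_is_inj inv_f_f)
  qed
  have "\<Psi> (flat x) = x" using U(3,6) unfolding homeomorphism_def by blast
  then have "g' (flat x) = id" using g'_inv(1)[OF U(5)] flat_deriv_x by (simp add: inv_id)
  from that[OF U(1-7) right_inv g'_smult this] show thesis .
qed

end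

locale flat_chart = flattening W x r h u
  for W :: "(complex^'n) set" and x r h u +
  fixes U V :: "(complex^'n) set" and \<Psi> :: "complex^'n \<Rightarrow> complex^'n" and g'
  assumes open_U: "open U" and U_sub_W: "U \<subseteq> W" and x_in_U: "x \<in> U"
    and open_V: "open V" and flat_x_in_V: "flat x \<in> V"
    and homeo: "homeomorphism U V flat \<Psi>"
    and has_derivative_\<Psi>: "\<And>y. y \<in> V \<Longrightarrow> (\<Psi> has_derivative g' y) (at y)"
    and flat_deriv_g': "\<And>y b. y \<in> V \<Longrightarrow> flat_deriv (\<Psi> y) (g' y b) = b"
    and g'_smult: "\<And>y c w. y \<in> V \<Longrightarrow> g' y (c *s w) = c *s g' y w"
    and g'_flat_x: "g' (flat x) = id"

lemma (in flattening) exists_flat_chart: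
  obtains U V \<Psi> g' where "flat_chart W x r h u U V \<Psi> g'"
proof -
  obtain U V \<Psi> g' where "open U" "U \<subseteq> W" "x \<in> U" "open V" "flat x \<in> V"
    "homeomorphism U V flat \<Psi>" "\<And>y. y \<in> V \<Longrightarrow> (\<Psi> has_derivative g' y) (at y)"
    "\<And>y b. y \<in> V \<Longrightarrow> flat_deriv (\<Psi> y) (g' y b) = b"
    "\<And>y c w. y \<in> V \<Longrightarrow> g' y (c *s w) = c *s g' y w" "g' (flat x) = id"
    using flat_local_inverse by blast
  then have "flat_chart W x r h u U V \<Psi> g'"
    by (intro flat_chart.intro flattening_axioms flat_chart_axioms.intro)
  then show thesis by (rule that)
qed

context flat_chart
begin

lemma \<Psi>_flat: "z \<in> U \<Longrightarrow> \<Psi> (flat z) = z"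
  and flat_\<Psi>: "y \<in> V \<Longrightarrow> flat (\<Psi> y) = y"
  and \<Psi>_in_U: "y \<in> V \<Longrightarrow> \<Psi> y \<in> U"
  and flat_in_V: "z \<in> U \<Longrightarrow> flat z \<in> V"
  and continuous_on_flat: "continuous_on U flat"
  using homeo unfolding homeomorphism_def by blast+

lemma \<Psi>_in_W: "y \<in> V \<Longrightarrow> \<Psi> y \<in> W"
  using \<Psi>_in_U U_sub_W by blast

lemma \<Psi>_flat_x: "\<Psi> (flat x) = x"
  using \<Psi>_flat x_in_U by blast

lemma h_\<Psi>: "y \<in> V \<Longrightarrow> i < r \<Longrightarrow> h i (\<Psi> y) = fderiv (h i) x y"
  using dh_x_flat flat_\<Psi> by metis

lemma dh_\<Psi>_g': "y \<in> V \<Longrightarrow> i < r \<Longrightarrow> fderiv (h i) (\<Psi> y) (g' y b) = fderiv (h i) x b"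
  using dh_x_flat_deriv flat_deriv_g' by metis

lemma holo_map_on_\<Psi>: "holo_map_on V \<Psi>"
  unfolding holo_map_on_def using has_derivative_\<Psi> g'_smult by blast

lemma dh_independent:
  assumes "y \<in> U" and c: "\<forall>v. (\<Sum>j<r. c j * fderiv (h j) y v) = 0" and "i < r"
  shows "c i = 0"
proof -
  have "(\<Sum>j<r. c j * fderiv (h j) y (g' (flat y) (u i))) = (\<Sum>j<r. if j = i then c j else 0)"
    using dh_\<Psi>_g'[OF flat_in_V[OF \<open>y \<in> U\<close>]] \<Psi>_flat[OF \<open>y \<in> U\<close>] \<open>i < r\<close>
    by (intro sum.cong) (auto simp: dual_u)
  then show ?thesis using c \<open>i < r\<close> by simp
qed

lemma tangent_vector_from_ker_dh:
  assumes A: "A \<inter> W = {z\<in>W. \<forall>i<r. h i z = 0}" and p: "p \<in> V" "p \<in> ker_dh" and a: "a \<in> ker_dh"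
  shows "\<Psi> p \<in> A \<inter> W" and "g' p a \<in> tangent_space A (\<Psi> p)"
proof -
  have leaf: "\<Psi> q \<in> A \<inter> W" if "q \<in> V" "q \<in> ker_dh" for q
    using A that \<Psi>_in_W h_\<Psi> by (auto simp: ker_dh_def)
  then show "\<Psi> p \<in> A \<inter> W" using p .
  have "((\<lambda>t::real. p + t *\<^sub>R a) has_derivative (\<lambda>t. t *\<^sub>R a)) (at 0)"
    by (auto intro!: derivative_eq_intros)
  from has_derivative_compose[OF this has_derivative_\<Psi>] p(1)
  have "((\<lambda>t::real. \<Psi> (p + t *\<^sub>R a)) has_derivative (\<lambda>t. g' p (t *\<^sub>R a))) (at 0)" by simp
  moreover have "g' p (t *\<^sub>R a) = t *\<^sub>R g' p a" for t
    using linear_scale[OF has_derivative_linear[OF has_derivative_\<Psi>[OF p(1)]]] .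
  ultimately have "((\<lambda>t::real. \<Psi> (p + t *\<^sub>R a)) has_vector_derivative g' p a) (at 0)"
    by (simp add: has_vector_derivative_def)
  moreover have "\<forall>\<^sub>F t in nhds 0. \<Psi> (p + t *\<^sub>R a) \<in> A"
  proof -
    have "open {t::real. p + t *\<^sub>R a \<in> V}"
      using continuous_open_vimage[OF open_V, of "\<lambda>t::real. p + t *\<^sub>R a"] by (simp add: vimage_def)
    moreover have "p + t *\<^sub>R a \<in> ker_dh" for t
      using ker_dh_add_smult[OF p(2) a] by (simp add: scaleR_eq_smult_of_real)
    ultimately show ?thesis
      using p(1) leaf by (intro eventually_nhds_in_open[THEN eventually_mono]) auto
  qed
  ultimately show "g' p a \<in> tangent_space A (\<Psi> p)"
    unfolding tangent_space_def by (intro CollectI exI[of _ "\<lambda>t. \<Psi> (p + t *\<^sub>R a)"]) simp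
qed

end

section \<open>Analytic sets near a point of maximal vanishing rank\<close>

text \<open>Independence of the differentials at \<open>y\<close> is witnessed by a dual family \<open>u\<close>.\<close>

definition vanishing_rank_ge :: "(complex^'n) set \<Rightarrow> (complex^'n) set \<Rightarrow> complex^'n \<Rightarrow> nat \<Rightarrow> bool" where
  "vanishing_rank_ge A B y r \<longleftrightarrow> (\<exists>W h u. open W \<and> y \<in> W \<and> W \<subseteq> B \<and> (\<forall>i<r. cholo_on W (h i)) \<and>
     (\<forall>i<r. \<forall>z\<in>A \<inter> W. h i z = 0) \<and>
     (\<forall>i<r. \<forall>k<r. fderiv (h i) y (u k) = (if i = k then 1 else 0)))"

lemma dual_family_card_le:
  fixes l :: "nat \<Rightarrow> complex^'n \<Rightarrow> complex" and u :: "nat \<Rightarrow> complex^'n"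
  assumes lin: "\<And>i. i < r \<Longrightarrow> linear (l i)" and smult: "\<And>i c v. i < r \<Longrightarrow> l i (c *s v) = c * l i v"
    and dual: "\<And>i k. i < r \<Longrightarrow> k < r \<Longrightarrow> l i (u k) = (if i = k then 1 else 0)"
  shows "r \<le> CARD('n)"
proof -
  have inj: "inj_on u {..<r}"
    by (rule inj_onI) (metis dual lessThan_iff zero_neq_one)
  have "vec.independent (u ` {..<r})"
  proof
    assume "vec.dependent (u ` {..<r})"
    then obtain c where c: "\<exists>v\<in>u ` {..<r}. c v \<noteq> 0" "(\<Sum>v\<in>u ` {..<r}. c v *s v) = 0"
      using vec.dependent_finite[of "u ` {..<r}"] by auto
    then obtain i where i: "i < r" "c (u i) \<noteq> 0" by auto
    have "(\<Sum>k<r. c (u k) *s u k) = 0"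
      using c(2) sum.reindex[OF inj, of "\<lambda>v. c v *s v"] by simp
    moreover have "l i (\<Sum>k<r. c (u k) *s u k) = c (u i)"
      by (rule complex_linear_sum_dual[OF lin smult]) (use i dual in auto)
    ultimately show False using i linear_0[OF lin[OF i(1)]] by simp
  qed
  then have "card (u ` {..<r}) \<le> vec.dim (UNIV :: (complex^'n) set)"
    by (intro vec.independent_card_le_dim) auto
  then show ?thesis using card_image[OF inj] by (simp add: card_cart_basis)
qed

lemma vanishing_rank_ge_le_card:
  fixes A :: "(complex^'n) set"
  assumes "vanishing_rank_ge A B y r"
  shows "r \<le> CARD('n)"
proof -
  obtain W h and u :: "nat \<Rightarrow> complex^'n" where "y \<in> W" "\<forall>i<r. cholo_on W (h i)"
    "\<forall>i<r. \<forall>k<r. fderiv (h i) y (u k) = (if i = k then 1 else 0)"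
    using assms unfolding vanishing_rank_ge_def by blast
  then show ?thesis
    by (intro dual_family_card_le[of r "\<lambda>i. fderiv (h i) y" u])
       (auto intro: cholo_on_fderiv_smult bounded_linear.linear[OF cholo_on_bounded_linear])
qed

lemma fderiv_diff_sum_mult:
  assumes "cholo_on W G" "\<And>j. j < r \<Longrightarrow> cholo_on W (h j)" "y \<in> W"
  shows "fderiv (\<lambda>z. G z - (\<Sum>j<r. \<mu> j * h j z)) y = (\<lambda>v. fderiv G y v - (\<Sum>j<r. \<mu> j * fderiv (h j) y v))"
  using assms
  by (intro fderiv_eqI has_derivative_diff has_derivative_sum has_derivative_mult_right cholo_on_has_derivative) auto

text \<open>The new function is \<open>G\<close> minus the combination of the \<open>h\<^sub>i\<close> that cancels its values on the
  dual vectors \<open>u\<^sub>k\<close>; the new dual vector is \<open>a\<close>, normalised.\<close>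

lemma vanishing_rank_ge_Suc:
  assumes W: "open W" "y \<in> W" "W \<subseteq> B" and h: "\<And>i. i < r \<Longrightarrow> cholo_on W (h i)"
    and h0: "\<And>i z. i < r \<Longrightarrow> z \<in> A \<inter> W \<Longrightarrow> h i z = 0"
    and dual: "\<And>i k. i < r \<Longrightarrow> k < r \<Longrightarrow> fderiv (h i) y (u k) = (if i = k then 1 else 0)"
    and G: "cholo_on W G" and G0: "\<And>z. z \<in> A \<inter> W \<Longrightarrow> G z = 0"
    and a: "\<And>i. i < r \<Longrightarrow> fderiv (h i) y a = 0" and Ga: "fderiv G y a \<noteq> 0"
  shows "vanishing_rank_ge A B y (Suc r)"
proof -
  define \<mu> where "\<mu> k = fderiv G y (u k)" for k
  define h' where "h' i = (if i < r then h i else (\<lambda>z. G z - (\<Sum>j<r. \<mu> j * h j z)))" for i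
  define u' where "u' k = (if k < r then u k else (1 / fderiv G y a) *s a)" for k
  have G': "cholo_on W (\<lambda>z. G z - (\<Sum>j<r. \<mu> j * h j z))"
    using G h by (intro cholo_on_diff cholo_on_sum cholo_on_mult cholo_on_const) auto
  have dG': "fderiv (\<lambda>z. G z - (\<Sum>j<r. \<mu> j * h j z)) y v = fderiv G y v - (\<Sum>j<r. \<mu> j * fderiv (h j) y v)" for v
    using fderiv_diff_sum_mult[of W G r h y \<mu>] G h W(2) by simp
  have dh_smult: "fderiv (h i) y (c *s v) = c * fderiv (h i) y v" if "i < r" for i c v
    using cholo_on_fderiv_smult[OF h[OF that] W(2)] .
  have "fderiv (h' i) y (u' k) = (if i = k then 1 else 0)" if "i < Suc r" "k < Suc r" for i k
  proof (cases "i < r")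
    case True
    then show ?thesis using that dual a dh_smult by (auto simp: h'_def u'_def less_Suc_eq)
  next
    case False
    then have "i = r" using that by simp
    have dh': "fderiv (h' r) y v = fderiv G y v - (\<Sum>j<r. \<mu> j * fderiv (h j) y v)" for v
      by (simp add: h'_def dG')
    show ?thesis
    proof (cases "k < r")
      case True
      have "(\<Sum>j<r. \<mu> j * fderiv (h j) y (u k)) = (\<Sum>j<r. if j = k then \<mu> j else 0)"
        using True dual by (intro sum.cong) auto
      then show ?thesis using True \<open>i = r\<close> by (simp add: dh' u'_def \<mu>_def)
    next
      case False
      then have "k = r" using that by simp
      moreover have "fderiv G y ((1 / fderiv G y a) *s a) = 1"
        using cholo_on_fderiv_smult[OF G W(2)] Ga by simp
      ultimately show ?thesis using \<open>i = r\<close> a dh_smult by (simp add: dh' u'_def)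
    qed
  qed
  moreover have "h' i z = 0" if "i < Suc r" "z \<in> A \<inter> W" for i z
    using that h0 G0 by (auto simp: h'_def less_Suc_eq)
  moreover have "cholo_on W (h' i)" if "i < Suc r" for i
    using that h G' by (auto simp: h'_def less_Suc_eq)
  ultimately show ?thesis
    unfolding vanishing_rank_ge_def using W by blast
qed

context flat_chart
begin

context
  fixes A B :: "(complex^'n) set"
  assumes W_sub_B: "W \<subseteq> B" and h_vanish: "\<And>i z. i < r \<Longrightarrow> z \<in> A \<inter> W \<Longrightarrow> h i z = 0"
    and rank_max: "\<And>y r'. y \<in> A \<inter> B \<Longrightarrow> vanishing_rank_ge A B y r' \<Longrightarrow> r' \<le> r"
begin

text \<open>Otherwise \<open>G \<circ> flat\<close> would be one more function vanishing on \<open>A\<close> near \<open>\<Psi> w1\<close>, with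
  differential independent of the \<open>dh\<^sub>i\<close> there, contradicting the maximality of \<open>r\<close>.\<close>

lemma fderiv_along_ker_dh_vanishes:
  assumes N: "open N" "N \<subseteq> V" and G: "cholo_on N G" and G0: "\<And>w. w \<in> N \<Longrightarrow> \<Psi> w \<in> A \<Longrightarrow> G w = 0"
    and w1: "w1 \<in> N" "\<Psi> w1 \<in> A" and a: "a \<in> ker_dh"
  shows "fderiv G w1 a = 0"
proof (rule ccontr)
  assume nz: "fderiv G w1 a \<noteq> 0"
  define W' where "W' = U \<inter> flat -` N"
  define y where "y = \<Psi> w1"
  have w1V: "w1 \<in> V" using w1 N by auto
  have W': "open W'" "y \<in> W'" "W' \<subseteq> W"
    unfolding W'_def y_def
    using continuous_open_preimage[OF continuous_on_flat open_U N(1)] \<Psi>_in_U[OF w1V] flat_\<Psi>[OF w1V] w1 U_sub_W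
    by auto
  have flat_y: "flat y = w1" unfolding y_def by (rule flat_\<Psi>[OF w1V])
  have GP: "cholo_on W' (\<lambda>z. G (flat z))"
    by (rule cholo_on_compose[OF G holo_map_on_flat[THEN holo_map_on_subset]]) (use U_sub_W in \<open>auto simp: W'_def\<close>)
  have "y \<in> W" using W' by blast
  from fderiv_compose[OF G has_derivative_flat[OF this]]
  have "fderiv (\<lambda>z. G (flat z)) y = (\<lambda>v. fderiv G w1 (flat_deriv y v))"
    using flat_y w1(1) by simp
  then have dGP: "fderiv (\<lambda>z. G (flat z)) y (g' w1 b) = fderiv G w1 b" for b
    using flat_deriv_g'[OF w1V] by (simp add: y_def)
  have "vanishing_rank_ge A B y (Suc r)"
  proof (rule vanishing_rank_ge_Suc[OF W'(1,2) _ _ _ _ GP, where u="\<lambda>k. g' w1 (u k)" and a="g' w1 a"])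
    show "W' \<subseteq> B" using W'(3) W_sub_B by blast
    show "cholo_on W' (h i)" if "i < r" for i using cholo_on_subset[OF holo_h[OF that] W'(3)] .
    show "h i z = 0" if "i < r" "z \<in> A \<inter> W'" for i z using h_vanish that W'(3) by blast
    show "fderiv (h i) y (g' w1 (u k)) = (if i = k then 1 else 0)" if "i < r" "k < r" for i k
      using dh_\<Psi>_g'[OF w1V that(1)] dual_u[OF that] by (simp add: y_def)
    show "G (flat z) = 0" if "z \<in> A \<inter> W'" for z
      using that G0 \<Psi>_flat by (auto simp: W'_def)
    show "fderiv (h i) y (g' w1 a) = 0" if "i < r" for i
      using dh_\<Psi>_g'[OF w1V that] a that by (simp add: y_def ker_dh_def)
    show "fderiv (\<lambda>z. G (flat z)) y (g' w1 a) \<noteq> 0" using dGP nz by simp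
  qed
  moreover have "y \<in> A \<inter> B" using w1 W' W_sub_B by (auto simp: y_def)
  ultimately have "Suc r \<le> r" using rank_max by blast
  then show False by simp
qed

text \<open>All iterated derivatives of \<open>G\<close> along \<open>ker_dh\<close> again vanish where \<open>\<Psi>\<close> meets \<open>A\<close>, in
  particular at \<open>flat x\<close>; the identity principle then makes \<open>G\<close> vanish on the flat leaf.\<close>

lemma vanishes_on_flat_leaf:
  assumes "x \<in> A" and G: "cholo_on V G" and G0: "\<And>w. w \<in> V \<Longrightarrow> \<Psi> w \<in> A \<Longrightarrow> G w = 0"
    and ball: "ball (flat x) \<rho> \<subseteq> V" and w: "w \<in> ball (flat x) \<rho>" "w \<in> ker_dh"
  shows "G w = 0"
proof -
  have "flat x \<in> ker_dh" using h_vanish \<open>x \<in> A\<close> x_in_W flat_in_ker_dh_iff by blast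
  define a where "a = w - flat x"
  have a: "a \<in> ker_dh" "norm a < \<rho>"
    using ker_dh_diff[OF w(2) \<open>flat x \<in> ker_dh\<close>] w(1) by (auto simp: a_def dist_norm norm_minus_commute)
  define Gs where "Gs m = ((\<lambda>F w. fderiv F w a) ^^ m) G" for m
  have "cholo_on V (Gs m) \<and> (\<forall>w\<in>V. \<Psi> w \<in> A \<longrightarrow> Gs m w = 0)" for m
  proof (induction m)
    case 0
    then show ?case using G G0 by (simp add: Gs_def)
  next
    case (Suc m)
    then have holo: "cholo_on V (Gs m)" and zero: "\<And>w. w \<in> V \<Longrightarrow> \<Psi> w \<in> A \<Longrightarrow> Gs m w = 0"
      by auto
    have "Gs (Suc m) = (\<lambda>w. fderiv (Gs m) w a)" by (simp add: Gs_def)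
    then show ?case
      using cholo_on_fderiv_apply[OF holo open_V]
        fderiv_along_ker_dh_vanishes[OF open_V order_refl holo zero _ _ a(1)] by simp
  qed
  then have holo: "\<And>m. cholo_on V (Gs m)" and zero: "\<And>m w. w \<in> V \<Longrightarrow> \<Psi> w \<in> A \<Longrightarrow> Gs m w = 0"
    by auto
  have "Gs 0 (flat x + a) = 0"
  proof (rule iterated_line_derivatives_zero_imp_zero[OF holo _ ball _ a(2)])
    show "Gs (Suc m) v = fderiv (Gs m) v a" for m v by (simp add: Gs_def)
    show "Gs m (flat x) = 0" for m using zero[OF flat_x_in_V] \<Psi>_flat_x \<open>x \<in> A\<close> by simp
  qed
  then show ?thesis by (simp add: Gs_def a_def)
qed

lemma locally_eq_common_zero_set:
  assumes "x \<in> A" and fs: "\<And>j. j < k \<Longrightarrow> cholo_on B (fs j)" and A: "A \<inter> B = {z\<in>B. \<forall>j<k. fs j z = 0}"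
  obtains W'' where "open W''" "x \<in> W''" "W'' \<subseteq> U" "A \<inter> W'' = {z\<in>W''. \<forall>i<r. h i z = 0}"
proof -
  obtain \<rho> where \<rho>: "\<rho> > 0" "ball (flat x) \<rho> \<subseteq> V" using open_V flat_x_in_V open_contains_ball by blast
  define W'' where "W'' = U \<inter> flat -` ball (flat x) \<rho>"
  have "open W''" unfolding W''_def by (rule continuous_open_preimage[OF continuous_on_flat open_U open_ball])
  moreover have "x \<in> W''" unfolding W''_def using x_in_U \<rho>(1) by auto
  moreover have "z \<in> A" if z: "z \<in> W''" "\<forall>i<r. h i z = 0" for z
  proof -
    have zU: "z \<in> U" "flat z \<in> ball (flat x) \<rho>" using z(1) by (auto simp: W''_def)
    have "fs j (\<Psi> (flat z)) = 0" if "j < k" for j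
    proof (rule vanishes_on_flat_leaf[OF \<open>x \<in> A\<close> _ _ \<rho>(2) zU(2)])
      show "cholo_on V (\<lambda>w. fs j (\<Psi> w))"
        using \<Psi>_in_W W_sub_B by (intro cholo_on_compose[OF fs[OF that] holo_map_on_\<Psi>]) auto
      show "fs j (\<Psi> w) = 0" if "w \<in> V" "\<Psi> w \<in> A" for w
        using A \<Psi>_in_W[OF that(1)] W_sub_B that(2) \<open>j < k\<close> by blast
      show "flat z \<in> ker_dh" using z(2) flat_in_ker_dh_iff by blast
    qed
    then show ?thesis using A \<Psi>_flat[OF zU(1)] zU(1) U_sub_W W_sub_B by auto
  qed
  then have "A \<inter> W'' = {z\<in>W''. \<forall>i<r. h i z = 0}"
    using h_vanish U_sub_W by (auto simp: W''_def)
  ultimately show thesis using that W''_def by blast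
qed

end

end

lemma exists_maximal_vanishing_rank:
  fixes A :: "(complex^'n) set"
  assumes "open B" "p \<in> A \<inter> B"
  obtains x r where "x \<in> A \<inter> B" "vanishing_rank_ge A B x r"
    "\<And>y r'. y \<in> A \<inter> B \<Longrightarrow> vanishing_rank_ge A B y r' \<Longrightarrow> r' \<le> r"
proof -
  define Rs where "Rs = {r. \<exists>y\<in>A \<inter> B. vanishing_rank_ge A B y r}"
  have "finite Rs"
    by (rule finite_subset[of _ "{..CARD('n)}"]) (auto simp: Rs_def dest: vanishing_rank_ge_le_card)
  moreover have "0 \<in> Rs" using assms unfolding Rs_def vanishing_rank_ge_def by blast
  ultimately have "Max Rs \<in> Rs" by (intro Max_in) auto
  moreover have "r' \<le> Max Rs" if "y \<in> A \<inter> B" "vanishing_rank_ge A B y r'" for y r'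
    using \<open>finite Rs\<close> that by (intro Max_ge) (auto simp: Rs_def)
  ultimately show thesis using that unfolding Rs_def by blast
qed

lemma analytic_in_regular_chart:
  fixes A :: "(complex^'n) set"
  assumes "analytic_in U A" "p \<in> A"
  obtains x W r h u where "x \<in> A" "flattening W x r h u" "r \<le> CARD('n)"
    "A \<inter> W = {z\<in>W. \<forall>i<r. h i z = 0}"
    "\<And>y c. y \<in> W \<Longrightarrow> \<forall>v. (\<Sum>i<r. c i * fderiv (h i) y v) = 0 \<Longrightarrow> \<forall>i<r. c i = 0"
proof -
  have "p \<in> U" using assms unfolding analytic_in_def by blast
  then obtain B where B: "open B" "p \<in> B"
    and "\<exists>(k::nat) fs. (\<forall>j<k. cholo_on B (fs j)) \<and> A \<inter> B = {z\<in>B. \<forall>j<k. fs j z = 0}"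
    using assms(1) unfolding analytic_in_def by blast
  then obtain k :: nat and fs where fs: "\<And>j. j < k \<Longrightarrow> cholo_on B (fs j)"
      and A: "A \<inter> B = {z\<in>B. \<forall>j<k. fs j z = 0}"
    by blast
  obtain x r where x: "x \<in> A \<inter> B" "vanishing_rank_ge A B x r"
    and rank_max: "\<And>y r'. y \<in> A \<inter> B \<Longrightarrow> vanishing_rank_ge A B y r' \<Longrightarrow> r' \<le> r"
    using exists_maximal_vanishing_rank[OF B(1)] assms(2) B(2) by blast
  then obtain W h u where W: "open W" "x \<in> W" "W \<subseteq> B" and h: "\<forall>i<r. cholo_on W (h i)"
    and h0: "\<forall>i<r. \<forall>z\<in>A \<inter> W. h i z = 0"
    and dual: "\<forall>i<r. \<forall>k<r. fderiv (h i) x (u k) = (if i = k then 1 else 0)"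
    unfolding vanishing_rank_ge_def by blast
  interpret flattening W x r h u using W h dual by unfold_locales auto
  obtain U' V \<Psi> g' where "flat_chart W x r h u U' V \<Psi> g'" by (rule exists_flat_chart)
  then interpret flat_chart W x r h u U' V \<Psi> g' .
  have h0': "\<And>i z. i < r \<Longrightarrow> z \<in> A \<inter> W \<Longrightarrow> h i z = 0" and xA: "x \<in> A"
    using h0 x by auto
  obtain W'' where W'': "open W''" "x \<in> W''" "W'' \<subseteq> U'" "A \<inter> W'' = {z\<in>W''. \<forall>i<r. h i z = 0}"
    by (rule locally_eq_common_zero_set[where A=A and B=B, OF W(3) h0' rank_max xA fs A])
  show thesis
  proof (rule that)
    show "x \<in> A" by (rule xA)
    have "W'' \<subseteq> W" using W''(3) U_sub_W by blast
    then show "flattening W'' x r h u"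
      using W''(1,2) cholo_on_subset[OF holo_h] dual_u by unfold_locales auto
    show "r \<le> CARD('n)" using vanishing_rank_ge_le_card[OF x(2)] .
    show "A \<inter> W'' = {z\<in>W''. \<forall>i<r. h i z = 0}" by (rule W''(4))
    show "\<forall>i<r. c i = 0" if "y \<in> W''" "\<forall>v. (\<Sum>i<r. c i * fderiv (h i) y v) = 0" for y c
      using dh_independent that W''(3) by blast
  qed
qed

lemma regular_pt_dim_zero_set:
  fixes A :: "(complex^'n) set"
  assumes W: "open W" and r: "r \<le> CARD('n)" and h: "\<And>i. i < r \<Longrightarrow> cholo_on W (h i)"
    and A: "A \<inter> W = {z\<in>W. \<forall>i<r. h i z = 0}"
    and indep: "\<And>y c. y \<in> W \<Longrightarrow> \<forall>v. (\<Sum>i<r. c i * fderiv (h i) y v) = 0 \<Longrightarrow> \<forall>i<r. c i = 0"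
    and z: "z \<in> A \<inter> W"
  shows "regular_pt_dim A z (CARD('n) - r)"
proof -
  have "CARD('n) - (CARD('n) - r) = r" using r by simp
  moreover have "\<exists>L. (\<forall>i<r. (h i has_derivative L i) (at y)) \<and>
      (\<forall>c. (\<forall>v. (\<Sum>i<r. c i * L i v) = 0) \<longrightarrow> (\<forall>i<r. c i = 0))" if "y \<in> W" for y
    using that h indep by (intro exI[of _ "\<lambda>i. fderiv (h i) y"]) (auto intro: cholo_on_has_derivative)
  ultimately show ?thesis
    unfolding regular_pt_dim_def using W h A z by (intro conjI exI[of _ W] exI[of _ h]) auto
qed

section \<open>Integrability obstruction for \<open>\<Omega>\<^sub>J\<close>\<close>

lemma omegaJ_swap: "omegaJ b a = - omegaJ a b"
  unfolding omegaJ_def by (simp add: sum_negf[symmetric] algebra_simps)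

text \<open>The pull-back of \<open>\<Omega>\<close> under \<open>\<Psi>\<close> has exterior derivative the pull-back of
  \<open>d\<Omega> = 2 \<Sum> dz\<^sub>2\<^sub>j\<^sub>-\<^sub>1 \<and> dz\<^sub>2\<^sub>j\<close>; the second derivatives of \<open>\<Psi>\<close> cancel by symmetry.\<close>

lemma omegaJ_pullback_alternating:
  fixes \<Psi> :: "complex^'n \<Rightarrow> complex^('m::finite \<times> bool)"
  assumes \<Psi>: "holo_map_on V \<Psi>" "\<And>p. p \<in> V \<Longrightarrow> (\<Psi> has_derivative g' p) (at p)"
    and V: "open V" "w0 \<in> V"
  shows "cholo_on V (\<lambda>p. omegaJ (\<Psi> p) (g' p a))"
    and "fderiv (\<lambda>p. omegaJ (\<Psi> p) (g' p a)) w0 b - fderiv (\<lambda>p. omegaJ (\<Psi> p) (g' p b)) w0 a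
           = 2 * omegaJ (g' w0 b) (g' w0 a)"
proof -
  define P where "P j p = \<Psi> p $ j" for j p
  have P: "cholo_on V (P j)" for j unfolding P_def by (rule cholo_on_component[OF \<Psi>(1)])
  have dP: "fderiv (P j) p v = g' p v $ j" if "p \<in> V" for j p v
    unfolding P_def using fderiv_component[OF \<Psi>(2)[OF that]] by simp
  have ddP: "cholo_on V (\<lambda>q. fderiv (P j) q c)" for j c by (rule cholo_on_fderiv_apply[OF P V(1)])
  define S where "S c = (\<lambda>p. \<Sum>l\<in>UNIV. P (l, False) p * fderiv (P (l, True)) p c
                                    - P (l, True) p * fderiv (P (l, False)) p c)" for c
  have S_eq: "omegaJ (\<Psi> p) (g' p c) = S c p" if "p \<in> V" for c p
    using dP[OF that] by (simp add: S_def omegaJ_def P_def)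
  have "cholo_on V (S a)"
    unfolding S_def by (intro cholo_on_sum cholo_on_diff cholo_on_mult P ddP)
  then show "cholo_on V (\<lambda>p. omegaJ (\<Psi> p) (g' p a))"
    by (rule cholo_on_transform_open[OF V(1)]) (simp add: S_eq)
  have "(S c has_derivative (\<lambda>d. \<Sum>l\<in>UNIV.
      (P (l, False) w0 * fderiv (\<lambda>q. fderiv (P (l, True)) q c) w0 d + fderiv (P (l, False)) w0 d * fderiv (P (l, True)) w0 c)
    - (P (l, True) w0 * fderiv (\<lambda>q. fderiv (P (l, False)) q c) w0 d + fderiv (P (l, True)) w0 d * fderiv (P (l, False)) w0 c)))
    (at w0)" for c
    unfolding S_def
    by (intro has_derivative_sum has_derivative_diff has_derivative_mult
        cholo_on_has_derivative[OF P V(2)] cholo_on_has_derivative[OF ddP V(2)])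
  note has_derivative_S = this
  have dS: "fderiv (S c) w0 d = (\<Sum>l\<in>UNIV.
      (P (l, False) w0 * fderiv (\<lambda>q. fderiv (P (l, True)) q c) w0 d + g' w0 d $ (l, False) * g' w0 c $ (l, True))
    - (P (l, True) w0 * fderiv (\<lambda>q. fderiv (P (l, False)) q c) w0 d + g' w0 d $ (l, True) * g' w0 c $ (l, False)))"
    for c d
    using fderiv_eqI[OF has_derivative_S[of c]] dP[OF V(2)] by simp
  have sym: "fderiv (\<lambda>q. fderiv (P j) q c) w0 d = fderiv (\<lambda>q. fderiv (P j) q d) w0 c" for j c d
    by (rule fderiv_fderiv_apply_commute[OF P V])
  have "fderiv (S a) w0 b - fderiv (S b) w0 a = 2 * omegaJ (g' w0 b) (g' w0 a)"
    unfolding dS omegaJ_def sum_subtractf[symmetric] sum_distrib_left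
    by (rule sum.cong) (auto simp: sym[of _ b a] algebra_simps)
  moreover have "fderiv (\<lambda>p. omegaJ (\<Psi> p) (g' p c)) w0 = fderiv (S c) w0" for c
    by (rule fderiv_transform_open[OF V]) (simp add: S_eq)
  ultimately show "fderiv (\<lambda>p. omegaJ (\<Psi> p) (g' p a)) w0 b - fderiv (\<lambda>p. omegaJ (\<Psi> p) (g' p b)) w0 a
      = 2 * omegaJ (g' w0 b) (g' w0 a)" by simp
qed

lemma omegaJ_vanishes_on_ker_dh:
  fixes A :: "(complex^('m::finite \<times> bool)) set"
  assumes "flat_chart W x r h u U V \<Psi> g'" and "x \<in> A" and A: "A \<inter> W = {z\<in>W. \<forall>i<r. h i z = 0}"
    and tang: "\<And>y. y \<in> A \<inter> W \<Longrightarrow> tangent_space A y \<subseteq> {v. omegaJ y v = 0}"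
    and a: "\<forall>i<r. fderiv (h i) x a = 0" and b: "\<forall>i<r. fderiv (h i) x b = 0"
  shows "omegaJ a b = 0"
proof -
  interpret flat_chart W x r h u U V \<Psi> g' by fact
  note pullback = omegaJ_pullback_alternating[OF holo_map_on_\<Psi> has_derivative_\<Psi> open_V flat_x_in_V]
  have x0: "flat x \<in> ker_dh" using A \<open>x \<in> A\<close> x_in_W flat_in_ker_dh_iff by blast
  have "fderiv (\<lambda>p. omegaJ (\<Psi> p) (g' p c)) (flat x) d = 0" if c: "c \<in> ker_dh" and d: "d \<in> ker_dh" for c d
  proof (rule fderiv_zero_along_line[OF pullback(1) open_V flat_x_in_V])
    fix t assume "flat x + t *s d \<in> V"
    moreover have "flat x + t *s d \<in> ker_dh" using ker_dh_add_smult[OF x0 d] .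
    ultimately show "omegaJ (\<Psi> (flat x + t *s d)) (g' (flat x + t *s d) c) = 0"
      using tangent_vector_from_ker_dh[OF A _ _ c] tang by blast
  qed
  then have "omegaJ (g' (flat x) b) (g' (flat x) a) = 0"
    using pullback(2)[of a b] a b by (simp add: ker_dh_def)
  then show ?thesis using g'_flat_x by (simp add: omegaJ_swap[of a b])
qed

lemma omegaJ_two_blocks:
  assumes "j \<noteq> k" and "\<And>i q. i \<noteq> j \<Longrightarrow> i \<noteq> k \<Longrightarrow> a $ (i, q) = 0"
  shows "omegaJ a b = a $ (j, False) * b $ (j, True) - a $ (j, True) * b $ (j, False)
                    + (a $ (k, False) * b $ (k, True) - a $ (k, True) * b $ (k, False))"
proof -
  have "omegaJ a b = (\<Sum>i\<in>{j, k}. a $ (i, False) * b $ (i, True) - a $ (i, True) * b $ (i, False))"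
    unfolding omegaJ_def by (rule sum.mono_neutral_right) (auto simp: assms(2))
  then show ?thesis using assms(1) by simp
qed

lemma exists_linear_combination_eq_1:
  fixes x y :: "'a::field"
  assumes "x \<noteq> 0 \<or> y \<noteq> 0"
  shows "\<exists>c d. x * c + y * d = 1"
proof (cases "x = 0")
  case True
  then have "x * 0 + y * (1 / y) = 1" using assms by simp
  then show ?thesis by blast
next
  case False
  then have "x * (1 / x) + y * 0 = 1" by simp
  then show ?thesis by blast
qed

text \<open>Only two symplectic blocks \<open>j \<noteq> k\<close> are needed: inside \<open>\<complex>\<^sup>4\<close> the kernel of \<open>l\<close> has
  dimension at least 3, more than a Lagrangian plane.\<close>

lemma omegaJ_nonisotropic_pair_in_kernel:
  fixes l :: "complex^('m::finite \<times> bool) \<Rightarrow> complex"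
  assumes lin: "linear l" and smult: "\<And>c v. l (c *s v) = c * l v" and m: "CARD('m) \<ge> 2"
  shows "\<exists>a b. l a = 0 \<and> l b = 0 \<and> omegaJ a b \<noteq> 0"
proof -
  obtain j k :: 'm where jk: "j \<noteq> k"
  proof -
    have "\<not> card (UNIV :: 'm set) \<le> Suc 0" using m by simp
    then show thesis using that card_le_Suc0_iff_eq[of "UNIV :: 'm set"] by auto
  qed
  define e where "e p = axis p (1::complex)" for p :: "'m \<times> bool"
  have e_nth: "e p $ q = (if q = p then 1 else 0)" for p q by (simp add: e_def axis_def)
  have l_comb: "l (c *s e p + d *s e q) = c * l (e p) + d * l (e q)" for c d p q
    using linear_add[OF lin] smult by simp
  consider i where "l (e (i, False)) = 0" "l (e (i, True)) = 0"
    | "l (e (j, False)) \<noteq> 0 \<or> l (e (j, True)) \<noteq> 0" "l (e (k, False)) \<noteq> 0 \<or> l (e (k, True)) \<noteq> 0"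
    by blast
  then show ?thesis
  proof cases
    case (1 i)
    have "omegaJ (e (i, False)) (e (i, True)) = (\<Sum>j\<in>UNIV. if j = i then 1 else 0)"
      unfolding omegaJ_def by (rule sum.cong) (auto simp: e_nth)
    then have "omegaJ (e (i, False)) (e (i, True)) = 1" by simp
    then show ?thesis using 1 by (intro exI[of _ "e (i, False)"] exI[of _ "e (i, True)"]) simp
  next
    case 2
    obtain c1 c2 where c12: "l (e (j, False)) * c1 + l (e (j, True)) * c2 = 1"
      using exists_linear_combination_eq_1[OF 2(1)] by blast
    obtain c3 c4 where c34: "l (e (k, False)) * c3 + l (e (k, True)) * c4 = 1"
      using exists_linear_combination_eq_1[OF 2(2)] by blast
    define a where "a = l (e (j, True)) *s e (j, False) + (- l (e (j, False))) *s e (j, True)"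
    define b where "b = (c1 *s e (j, False) + c2 *s e (j, True)) - (c3 *s e (k, False) + c4 *s e (k, True))"
    have a_nth: "a $ (i, q) = (if i = j then (if q then - l (e (j, False)) else l (e (j, True))) else 0)" for i q
      using jk by (auto simp: a_def e_nth)
    have "b $ (j, False) = c1" "b $ (j, True) = c2" using jk by (auto simp: b_def e_nth)
    then have "omegaJ a b = l (e (j, True)) * c2 + l (e (j, False)) * c1"
      using jk by (subst omegaJ_two_blocks[OF jk]) (simp_all add: a_nth)
    then have "omegaJ a b = 1" using c12 by (simp add: algebra_simps)
    moreover have "l a = 0" unfolding a_def l_comb by (simp add: mult.commute)
    moreover have "l b = 0" unfolding b_def linear_diff[OF lin] l_comb using c12 c34 by (simp add: mult.commute)
    ultimately show ?thesis by (intro exI[of _ a] exI[of _ b]) simp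
  qed
qed

theorem corollary2p6:
  assumes "CARD('m::finite) \<ge> 2"
  shows "\<not> has_integral_manifold (omegaJ :: complex ^ ('m \<times> bool) \<Rightarrow> _) 0"
proof
  assume "has_integral_manifold (omegaJ :: complex ^ ('m \<times> bool) \<Rightarrow> _) 0"
  then obtain U and A :: "(complex^('m \<times> bool)) set" where an: "analytic_in U A" "0 \<in> A"
    and dim: "\<And>x d. regular_pt_dim A x d \<Longrightarrow> d = CARD('m \<times> bool) - 1"
    and tang: "\<And>x. regular_pt A x \<Longrightarrow> tangent_space A x \<subseteq> {v. omegaJ x v = 0}"
    unfolding has_integral_manifold_def by blast
  obtain x W r h u where "x \<in> A" and fl: "flattening W x r h u" and r: "r \<le> CARD('m \<times> bool)"
    and A: "A \<inter> W = {z\<in>W. \<forall>i<r. h i z = 0}"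
    and indep: "\<And>y c. y \<in> W \<Longrightarrow> \<forall>v. (\<Sum>i<r. c i * fderiv (h i) y v) = 0 \<Longrightarrow> \<forall>i<r. c i = 0"
    using analytic_in_regular_chart[OF an] by blast
  interpret flattening W x r h u by (rule fl)
  have reg: "regular_pt_dim A z (CARD('m \<times> bool) - r)" if "z \<in> A \<inter> W" for z
    by (rule regular_pt_dim_zero_set[OF open_W r holo_h A indep that])
  have "CARD('m \<times> bool) - r = CARD('m \<times> bool) - 1"
    using dim[OF reg] \<open>x \<in> A\<close> x_in_W by blast
  moreover have "CARD('m \<times> bool) \<ge> 4" using assms by (simp add: card_prod)
  ultimately have r1: "r = 1" using r by linarith
  obtain a b where ab: "fderiv (h 0) x a = 0" "fderiv (h 0) x b = 0" and "omegaJ a b \<noteq> 0"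
    using omegaJ_nonisotropic_pair_in_kernel[OF linear_dh_x dh_x_smult assms] r1 by auto
  moreover obtain U' V \<Psi> g' where "flat_chart W x r h u U' V \<Psi> g'" by (rule exists_flat_chart)
  then have "omegaJ a b = 0"
    by (rule omegaJ_vanishes_on_ker_dh[OF _ \<open>x \<in> A\<close> A])
       (use tang reg ab r1 in \<open>auto simp: regular_pt_def\<close>)
  ultimately show False by simp
qed

end
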